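(* Let $H$ be a $3$-graph with $s$ vertices, let $t\geq 1$, and let $G$ be a $3$-graph that is $H\sqcup S_{2,t}$-free. Let $v\in V(G)$. If $G-\{v\}$ contains a copy of $H$, then $\omega(G_v)\leq s+t$.
   Context: A $3$-graph $G$ is $F$-free if it contains no subgraph isomorphic to $F$. $S_{2,t}$ is the $3$-graph with vertex set $\{w_1,w_2,u_1,\dots,u_t\}$ and edge set $\{w_1w_2u_1,\dots,w_1w_2u_t\}$. $\sqcup$ denotes vertex-disjoint union. For $S\subseteq V(G)$, $G-S$ is the subgraph of $G$ induced by $V(G)\setminus S$. The link graph of $v$ is the $2$-graph $G_v=\{ab: vab\in E(G)\}$, and $\omega(\cdot)$ denotes the order of a maximum clique of a $2$-graph. *)

theory Defs
  imports Main
begin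

definition hyper3 :: "'a set \<Rightarrow> 'a set set \<Rightarrow> bool" where
  "hyper3 V E \<longleftrightarrow> finite V \<and> (\<forall>e\<in>E. e \<subseteq> V \<and> card e = 3)"

definition contains_copy :: "'b set \<Rightarrow> 'b set set \<Rightarrow> 'a set \<Rightarrow> 'a set set \<Rightarrow> bool" where
  "contains_copy VF EF VG EG \<longleftrightarrow>
     (\<exists>f. inj_on f VF \<and> f ` VF \<subseteq> VG \<and> (\<forall>e\<in>EF. f ` e \<in> EG))"

text \<open>S_{2,t}: vertices 0 (= w1), 1 (= w2), 2..t+1 (= u_1..u_t); edges {0,1,k}.\<close>
definition S2_verts :: "nat \<Rightarrow> nat set" where
  "S2_verts t = {0..<t+2}"
definition S2_edges :: "nat \<Rightarrow> nat set set" where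
  "S2_edges t = {{0, 1, k} | k. 2 \<le> k \<and> k < t + 2}"

definition dunion_verts :: "'b set \<Rightarrow> 'c set \<Rightarrow> ('b + 'c) set" where
  "dunion_verts V1 V2 = Inl ` V1 \<union> Inr ` V2"
definition dunion_edges :: "'b set set \<Rightarrow> 'c set set \<Rightarrow> ('b + 'c) set set" where
  "dunion_edges E1 E2 = (image Inl) ` E1 \<union> (image Inr) ` E2"

definition link :: "'a set set \<Rightarrow> 'a \<Rightarrow> 'a set set" where
  "link E v = {{a, b} | a b. {v, a, b} \<in> E}"

definition clique2 :: "'a set set \<Rightarrow> 'a set \<Rightarrow> bool" where
  "clique2 L K \<longleftrightarrow> (\<forall>a\<in>K. \<forall>b\<in>K. a \<noteq> b \<longrightarrow> {a, b} \<in> L)"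

definition omega2 :: "'a set \<Rightarrow> 'a set set \<Rightarrow> nat" where
  "omega2 W L = Max {card K | K. K \<subseteq> W \<and> clique2 L K}"

end

(* If the link of v had a clique K in G - v with more than s + t vertices, then t + 1 of
   them, say c, u_1, ..., u_t, would avoid the given copy of H in G - v.  The edges
   {v, c, u_i} of G form a copy of S_{2,t} with spine {v, c} that is vertex-disjoint
   from that copy of H, so G would contain the disjoint union of H and S_{2,t}. *)
theory Submission
  imports Defs
begin

definition copy_map :: "('b \<Rightarrow> 'a) \<Rightarrow> 'b set \<Rightarrow> 'b set set \<Rightarrow> 'a set \<Rightarrow> 'a set set \<Rightarrow> bool" where
  "copy_map f VF EF VG EG \<longleftrightarrow> inj_on f VF \<and> f ` VF \<subseteq> VG \<and> (\<forall>e\<in>EF. f ` e \<in> EG)"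

lemma contains_copy_iff_copy_map:
  "contains_copy VF EF VG EG \<longleftrightarrow> (\<exists>f. copy_map f VF EF VG EG)"
  unfolding contains_copy_def copy_map_def ..

lemma copy_map_mono:
  assumes "copy_map f VF EF VG' EG'" "VG' \<subseteq> VG" "EG' \<subseteq> EG"
  shows "copy_map f VF EF VG EG"
  using assms unfolding copy_map_def by blast

lemma copy_map_dunion:
  assumes f: "copy_map f V1 E1 VG EG" and g: "copy_map g V2 E2 VG EG"
    and disjoint: "f ` V1 \<inter> g ` V2 = {}"
  shows "copy_map (case_sum f g) (dunion_verts V1 V2) (dunion_edges E1 E2) VG EG"
proof -
  have "inj_on (case_sum f g) (Inl ` V1 \<union> Inr ` V2)"
  proof (rule inj_onI)
    fix x y
    assume "x \<in> Inl ` V1 \<union> Inr ` V2" "y \<in> Inl ` V1 \<union> Inr ` V2"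
      and "case_sum f g x = case_sum f g y"
    then show "x = y"
      using f g disjoint unfolding copy_map_def
      by (elim UnE imageE) (auto dest: inj_onD)
  qed
  moreover have "case_sum f g ` image Inl e = f ` e" "case_sum f g ` image Inr e' = g ` e'" for e e'
    by (simp_all add: image_image)
  ultimately show ?thesis
    using f g unfolding copy_map_def dunion_verts_def dunion_edges_def by auto
qed

lemma copy_map_S2_on_pair:
  assumes "w1 \<in> VG" "w2 \<in> VG" "w1 \<noteq> w2" "U \<subseteq> VG" "w1 \<notin> U" "w2 \<notin> U"
    and "finite U" "card U = t" and edges: "\<forall>u\<in>U. {w1, w2, u} \<in> EG"
  obtains g where "copy_map g (S2_verts t) (S2_edges t) VG EG" "g ` S2_verts t = {w1, w2} \<union> U"
proof -
  obtain h where h: "bij_betw h {2..<t+2} U"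
    using finite_same_card_bij[of "{2..<t+2}" U] assms(7,8) by auto
  define g where "g k = (if k = 0 then w1 else if k = 1 then w2 else h k)" for k
  have S2: "S2_verts t = insert 0 (insert 1 {2..<t+2})"
    unfolding S2_verts_def by auto
  have "bij_betw g {2..<t+2} U"
    using h by (rule bij_betw_cong[THEN iffD1, rotated]) (simp add: g_def)
  then have leaves: "inj_on g {2..<t+2}" "g ` {2..<t+2} = U"
    by (simp_all add: bij_betw_def)
  have spine: "g 0 = w1" "g 1 = w2"
    by (simp_all add: g_def)
  have inj1: "inj_on g (insert 1 {2..<t+2})"
    using leaves assms(6) spine(2) by simp
  have image1: "g ` insert 1 {2..<t+2} = insert w2 U"
    using leaves(2) spine(2) by simp
  have inj: "inj_on g (S2_verts t)"
    using inj1 image1 assms(3,5) spine(1) unfolding S2 by simp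
  have image: "g ` S2_verts t = {w1, w2} \<union> U"
    using image1 spine(1) unfolding S2 by simp
  have "g ` e \<in> EG" if "e \<in> S2_edges t" for e
  proof -
    obtain k where k: "2 \<le> k" "k < t + 2" "e = {0, 1, k}"
      using \<open>e \<in> S2_edges t\<close> unfolding S2_edges_def by blast
    have "g k \<in> U"
      using leaves(2) k(1,2) by auto
    moreover have "g ` e = {w1, w2, g k}"
      using k(3) spine by simp
    ultimately show ?thesis
      using edges by simp
  qed
  with inj image assms(1,2,4) have "copy_map g (S2_verts t) (S2_edges t) VG EG"
    unfolding copy_map_def by auto
  then show thesis
    using image by (rule that)
qed

lemma link_edgeD:
  assumes "{x, y} \<in> link E v"
  shows "{v, x, y} \<in> E"
proof -
  obtain a b where ab: "{x, y} = {a, b}" "{v, a, b} \<in> E"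
    using assms unfolding link_def by blast
  have "{v, x, y} = {v, a, b}"
    using ab(1) by auto
  with ab(2) show ?thesis
    by simp
qed

lemma contains_copy_dunion_S2_of_large_link_clique:
  assumes H: "copy_map f VH EH VG EG" "v \<notin> f ` VH" "finite VH"
    and K: "K \<subseteq> VG - {v}" "clique2 (link EG v) K" "finite K" "card VH + t < card K"
    and "v \<in> VG"
  shows "contains_copy (dunion_verts VH (S2_verts t)) (dunion_edges EH (S2_edges t)) VG EG"
proof -
  define C where "C = K - f ` VH"
  have "card K - card (f ` VH) \<le> card C"
    unfolding C_def using H(3) by (intro diff_card_le_card_Diff) simp
  moreover have "card (f ` VH) \<le> card VH"
    using H(3) by (rule card_image_le)
  ultimately have card_C: "t < card C"
    using K(4) by linarith
  then obtain c where c: "c \<in> C"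
    by (metis card.empty equals0I not_less_zero)
  have "t \<le> card (C - {c})"
    using card_C c by simp
  then obtain U where U: "U \<subseteq> C - {c}" "card U = t" "finite U"
    by (rule obtain_subset_with_card_n)
  have C_sub: "C \<subseteq> VG - {v}" "C \<inter> f ` VH = {}"
    using K(1) unfolding C_def by auto
  have "{v, c, u} \<in> EG" if "u \<in> U" for u
  proof -
    have "c \<in> K" "u \<in> K" "c \<noteq> u"
      using c U(1) that unfolding C_def by auto
    then have "{c, u} \<in> link EG v"
      using K(2) unfolding clique2_def by simp
    then show ?thesis
      by (rule link_edgeD)
  qed
  moreover have "c \<in> VG" "v \<noteq> c" "U \<subseteq> VG" "v \<notin> U" "c \<notin> U"
    using c U(1) C_sub(1) by auto
  ultimately obtain g where g: "copy_map g (S2_verts t) (S2_edges t) VG EG"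
      "g ` S2_verts t = {v, c} \<union> U"
    using copy_map_S2_on_pair[of v VG c U t EG] \<open>v \<in> VG\<close> U(2,3) by metis
  have "f ` VH \<inter> g ` S2_verts t = {}"
    using g(2) H(2) c U(1) C_sub(2) by auto
  then have "copy_map (case_sum f g) (dunion_verts VH (S2_verts t)) (dunion_edges EH (S2_edges t)) VG EG"
    using H(1) g(1) by (intro copy_map_dunion)
  then show ?thesis
    unfolding contains_copy_iff_copy_map by blast
qed

lemma omega2_le:
  assumes "finite W" and clique_bound: "\<And>K. K \<subseteq> W \<Longrightarrow> clique2 L K \<Longrightarrow> card K \<le> n"
  shows "omega2 W L \<le> n"
proof -
  let ?sizes = "{card K | K. K \<subseteq> W \<and> clique2 L K}"
  have "card {} \<in> ?sizes"
    unfolding clique2_def by (intro CollectI exI[of _ "{}"]) simp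
  have "?sizes \<subseteq> card ` Pow W"
    by blast
  then have "finite ?sizes"
    using assms(1) finite_subset by blast
  moreover have "?sizes \<noteq> {}"
    using \<open>card {} \<in> ?sizes\<close> by blast
  moreover have "m \<le> n" if "m \<in> ?sizes" for m
    using that clique_bound by blast
  ultimately show ?thesis
    unfolding omega2_def by (rule Max.boundedI)
qed

theorem claim3p5:
  fixes VH :: "'b set" and EH :: "'b set set"
    and VG :: "'a set" and EG :: "'a set set"
    and s t :: nat and v :: 'a
  assumes "hyper3 VH EH" and "card VH = s"
    and "t \<ge> 1"
    and "hyper3 VG EG"
    and "\<not> contains_copy (dunion_verts VH (S2_verts t)) (dunion_edges EH (S2_edges t)) VG EG"
    and "v \<in> VG"
    and "contains_copy VH EH (VG - {v}) {e \<in> EG. v \<notin> e}"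
  shows "omega2 (VG - {v}) (link EG v) \<le> s + t"
proof -
  have fin: "finite VH" "finite VG"
    using assms(1,4) unfolding hyper3_def by simp_all
  obtain f where f: "copy_map f VH EH (VG - {v}) {e \<in> EG. v \<notin> e}"
    using assms(7) unfolding contains_copy_iff_copy_map by blast
  then have "copy_map f VH EH VG EG"
    by (rule copy_map_mono) auto
  have "v \<notin> f ` VH"
    using f unfolding copy_map_def by blast
  show ?thesis
  proof (rule omega2_le)
    show "finite (VG - {v})"
      using fin(2) by simp
  next
    fix K assume K: "K \<subseteq> VG - {v}" "clique2 (link EG v) K"
    have "finite K"
      using K(1) fin(2) finite_subset by blast
    show "card K \<le> s + t"
    proof (rule ccontr)
      assume "\<not> card K \<le> s + t"
      then show False
        using contains_copy_dunion_S2_of_large_link_clique[OF \<open>copy_map f VH EH VG EG\<close>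
            \<open>v \<notin> f ` VH\<close> fin(1) K \<open>finite K\<close>, of t] assms(2,5,6) by simp
    qed
  qed
qed

end
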